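(* In the construction described in the context, fix $i\ge2$. For $2\le k\le i$ let $T_{ik}=D_iD_{i-1}\cdots D_k\le G_i$. Then: (a) each $T_{ik}$ is normal in $G_i$; (b) each $T_{ik}$ is complemented in $G_i$ by the subgroup $G_{k-1}$; (c) $[T_{ik},R_{k-1}]=T_{ik}$.
   Context: For a group $X$ acted on by a group $Y$, $[X,Y]$ denotes the subgroup generated by all $x^{-1}x^{y}$. A finite $p$-group $P$ is extra-special if $P'=Z(P)$ has order $p$. Construction: let $p_1,p_2,\dots$ be an infinite sequence of primes with $p_{i+1}\ne p_i$ for all $i$. Define finite groups $G_1\le G_2\le\cdots$ and subgroups $R_i\le G_i$ recursively. Let $G_1=R_1$ be cyclic of order $p_1$. For $i\ge2$: let $M_i$ be an extra-special group of order $p_i^3$; let $B$ be the base group of the regular wreath product $M_i\wr G_{i-1}$ (direct product of $|G_{i-1}|$ copies of $M_i$, permuted regularly by $G_{i-1}$); let $B_i=B/[B',G_{i-1}]$ with the induced $G_{i-1}$-action; $D_i=[B_i,R_{i-1}]$; $G_i=D_i\rtimes G_{i-1}$; $R_i=D_i'$. Each $D_j$ ($j\le i$) is regarded as a subgroup of $G_j\le G_i$. *)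

theory Defs
  imports "HOL-Algebra.Algebra"
begin

definition group_center :: "('a, 'b) monoid_scheme \<Rightarrow> 'a set" where
  "group_center G = {z \<in> carrier G. \<forall>x \<in> carrier G. z \<otimes>\<^bsub>G\<^esub> x = x \<otimes>\<^bsub>G\<^esub> z}"

definition extra_special :: "nat \<Rightarrow> ('a, 'b) monoid_scheme \<Rightarrow> bool" where
  "extra_special p P \<longleftrightarrow> group P \<and> Factorial_Ring.prime p \<and> finite (carrier P)
     \<and> (\<exists>n. card (carrier P) = p ^ n)
     \<and> derived P (carrier P) = group_center P
     \<and> card (group_center P) = p"

text \<open>[X,Y] for a group acted on by Y via act (act y x = x^y): the subgroup of G
  generated by all x^{-1} x^y.\<close>
definition comm_act :: "('a, 'b) monoid_scheme \<Rightarrow> ('c \<Rightarrow> 'a \<Rightarrow> 'a) \<Rightarrow> 'a set \<Rightarrow> 'c set \<Rightarrow> 'a set" where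
  "comm_act G act S T = generate G (\<Union>x \<in> S. \<Union>y \<in> T. {inv\<^bsub>G\<^esub> x \<otimes>\<^bsub>G\<^esub> act y x})"

definition conj_act :: "('a, 'b) monoid_scheme \<Rightarrow> 'a \<Rightarrow> 'a \<Rightarrow> 'a" where
  "conj_act G g x = inv\<^bsub>G\<^esub> g \<otimes>\<^bsub>G\<^esub> x \<otimes>\<^bsub>G\<^esub> g"

text \<open>Base group of the regular wreath product M wr H: the direct product of
  |H| copies of M, indexed by the elements of H.\<close>
definition wr_base :: "('a, 'c) monoid_scheme \<Rightarrow> ('m, 'd) monoid_scheme \<Rightarrow> ('a \<Rightarrow> 'm) monoid" where
  "wr_base H M = product_group (carrier H) (\<lambda>_. M)"

definition wr_act :: "('a, 'c) monoid_scheme \<Rightarrow> 'a \<Rightarrow> ('a \<Rightarrow> 'm) \<Rightarrow> ('a \<Rightarrow> 'm)" where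
  "wr_act H g f = (\<lambda>x \<in> carrier H. f (x \<otimes>\<^bsub>H\<^esub> inv\<^bsub>H\<^esub> g))"

definition wr_kernel :: "('a, 'c) monoid_scheme \<Rightarrow> ('m, 'd) monoid_scheme \<Rightarrow> ('a \<Rightarrow> 'm) set" where
  "wr_kernel H M = comm_act (wr_base H M) (wr_act H)
      (derived (wr_base H M) (carrier (wr_base H M))) (carrier H)"

text \<open>B_i = B/[B',H] with the induced H-action (the action maps cosets to cosets).\<close>
definition quot_base :: "('a, 'c) monoid_scheme \<Rightarrow> ('m, 'd) monoid_scheme \<Rightarrow> ('a \<Rightarrow> 'm) set monoid" where
  "quot_base H M = wr_base H M Mod wr_kernel H M"

definition quot_act :: "('a, 'c) monoid_scheme \<Rightarrow> 'a \<Rightarrow> ('a \<Rightarrow> 'm) set \<Rightarrow> ('a \<Rightarrow> 'm) set" where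
  "quot_act H g C = wr_act H g ` C"

text \<open>D_i = [B_i, R_{i-1}], as a subgroup of B_i (H = G_{i-1}, R = R_{i-1}).\<close>
definition D_concrete :: "('a, 'c) monoid_scheme \<Rightarrow> 'a set \<Rightarrow> ('m, 'd) monoid_scheme \<Rightarrow> ('a \<Rightarrow> 'm) set monoid" where
  "D_concrete H R M = (quot_base H M)\<lparr>carrier :=
      comm_act (quot_base H M) (quot_act H) (carrier (quot_base H M)) R\<rparr>"

text \<open>A realisation of the construction inside an ambient group A: the groups
  G_i are the subgroups A restricted to Gc i, the D_i and R_i are subsets of the
  ambient carrier.\<close>
definition construction ::
  "(nat \<Rightarrow> nat) \<Rightarrow> (nat \<Rightarrow> ('m, 'd) monoid_scheme) \<Rightarrow> ('a, 'c) monoid_scheme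
     \<Rightarrow> (nat \<Rightarrow> 'a set) \<Rightarrow> (nat \<Rightarrow> 'a set) \<Rightarrow> (nat \<Rightarrow> 'a set) \<Rightarrow> bool" where
  "construction p M A Gc D R \<longleftrightarrow>
     group A
   \<and> (\<forall>i\<ge>1. Factorial_Ring.prime (p i) \<and> p (Suc i) \<noteq> p i)
   \<and> (\<forall>i\<ge>2. extra_special (p i) (M i) \<and> card (carrier (M i)) = p i ^ 3)
   \<and> subgroup (Gc 1) A \<and> cyclic_group (A\<lparr>carrier := Gc 1\<rparr>) \<and> card (Gc 1) = p 1
   \<and> R 1 = Gc 1
   \<and> (\<forall>i\<ge>2.
        subgroup (Gc i) A
      \<and> Gc (i - 1) \<subseteq> Gc i
      \<and> D i \<lhd> A\<lparr>carrier := Gc i\<rparr>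
      \<and> D i \<inter> Gc (i - 1) = {\<one>\<^bsub>A\<^esub>}
      \<and> D i <#>\<^bsub>A\<^esub> Gc (i - 1) = Gc i
      \<and> (\<exists>\<phi>. \<phi> \<in> iso (A\<lparr>carrier := D i\<rparr>)
                   (D_concrete (A\<lparr>carrier := Gc (i - 1)\<rparr>) (R (i - 1)) (M i))
             \<and> (\<forall>g \<in> Gc (i - 1). \<forall>d \<in> D i.
                  \<phi> (conj_act A g d) = quot_act (A\<lparr>carrier := Gc (i - 1)\<rparr>) g (\<phi> d)))
      \<and> R i = derived A (D i))"

text \<open>T_{ik} = D_i D_{i-1} ... D_k, defined for k \<le> i via T_prod D k n = D_{k+n} ... D_k.\<close>
fun T_prod :: "('a, 'c) monoid_scheme \<Rightarrow> (nat \<Rightarrow> 'a set) \<Rightarrow> nat \<Rightarrow> nat \<Rightarrow> 'a set" where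
  "T_prod A D k 0 = D k"
| "T_prod A D k (Suc n) = D (k + Suc n) <#>\<^bsub>A\<^esub> T_prod A D k n"

definition T_set :: "('a, 'c) monoid_scheme \<Rightarrow> (nat \<Rightarrow> 'a set) \<Rightarrow> nat \<Rightarrow> nat \<Rightarrow> 'a set" where
  "T_set A D i k = T_prod A D k (i - k)"

end

theory Submission
  imports Defs
begin

text \<open>
  Normality and complementation are inherited along the tower: if \<open>N \<lhd> X = N Y\<close> with
  \<open>N \<inter> Y = 1\<close> and \<open>T \<lhd> Y\<close>, then \<open>N T \<lhd> X\<close>, and a complement \<open>Z \<le> Y\<close> of \<open>T\<close> in \<open>Y\<close>
  is a complement of \<open>N T\<close> in \<open>X\<close>.

  The heart of (c) is \<open>[D\<^sub>j, R\<^sub>j\<^sub>-\<^sub>1] = D\<^sub>j\<close>. Since \<open>D\<^sub>j\<close> is equivariantly isomorphic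
  to \<open>[B, R]\<close> with \<open>B = B\<^sub>j\<close> and \<open>R = R\<^sub>j\<^sub>-\<^sub>1\<close>, this amounts to \<open>[[B, R], R] = [B, R]\<close>.
  Now \<open>R\<close> is a \<open>p\<^sub>j\<^sub>-\<^sub>1\<close>-group acting on the \<open>p\<^sub>j\<close>-group \<open>P = M\<^sub>j\<^bsup>G\<^sub>j\<^sub>-\<^sub>1\<^esup>\<close>, and for
  such a coprime action every element of \<open>P\<close> is a fixed point of a given \<open>g \<in> R\<close> times an
  element of \<open>[P, R]\<close>: for the element with entry \<open>m\<close> at a single coordinate \<open>y\<close>, spread an
  \<open>ord g\<close>-th root of \<open>m\<close> over the \<open>\<langle>g\<rangle>\<close>-orbit of \<open>y\<close>. This gives \<open>[[P, R], R] = [P, R]\<close>,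
  which descends to the quotient \<open>B\<close> of \<open>P\<close>.

  Finally, if \<open>T = D\<^sub>i\<^sub>-\<^sub>1 \<cdots> D\<^sub>k\<close> satisfies \<open>[T, R\<^sub>k\<^sub>-\<^sub>1] = T\<close>, then \<open>[D\<^sub>i T, R\<^sub>k\<^sub>-\<^sub>1]\<close> contains
  \<open>T \<supseteq> D\<^sub>i\<^sub>-\<^sub>1 \<supseteq> R\<^sub>i\<^sub>-\<^sub>1\<close>, hence also \<open>[D\<^sub>i, R\<^sub>i\<^sub>-\<^sub>1] = D\<^sub>i\<close>, so it is all of \<open>D\<^sub>i T\<close>.
\<close>

lemma (in group) inv_mult_cancel_left [simp]:
  "a \<in> carrier G \<Longrightarrow> z \<in> carrier G \<Longrightarrow> inv a \<otimes> (a \<otimes> z) = z"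
  by (simp add: m_assoc[symmetric])

lemma (in group) mult_inv_cancel_left [simp]:
  "a \<in> carrier G \<Longrightarrow> z \<in> carrier G \<Longrightarrow> a \<otimes> (inv a \<otimes> z) = z"
  by (simp add: m_assoc[symmetric])

lemma (in group) generate_conj_closed:
  assumes S: "S \<subseteq> carrier G" and t: "t \<in> carrier G"
    and gen: "\<And>s. s \<in> S \<Longrightarrow> inv t \<otimes> s \<otimes> t \<in> generate G S"
    and w: "w \<in> generate G S"
  shows "inv t \<otimes> w \<otimes> t \<in> generate G S"
  using w
proof induct
  case one
  show ?case using t generate.one by simp
next
  case (incl h)
  then show ?case by (rule gen)
next
  case (inv h)
  have "h \<in> carrier G" using inv S by blast
  then have "inv t \<otimes> inv h \<otimes> t = inv (inv t \<otimes> h \<otimes> t)"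
    using t by (simp add: m_assoc inv_mult_group)
  then show ?case using generate_m_inv_closed[OF S gen[OF inv]] by simp
next
  case (eng a b)
  have "a \<in> carrier G" "b \<in> carrier G" using eng generate_in_carrier[OF S] by auto
  then have "inv t \<otimes> (a \<otimes> b) \<otimes> t = (inv t \<otimes> a \<otimes> t) \<otimes> (inv t \<otimes> b \<otimes> t)"
    using t by (simp add: m_assoc)
  then show ?case using generate.eng[OF eng(2,4)] by simp
qed

lemma (in group) normal_conj_closed:
  assumes S: "subgroup S G" and N: "N \<lhd> G\<lparr>carrier := S\<rparr>" and x: "x \<in> S" and n: "n \<in> N"
  shows "inv x \<otimes> n \<otimes> x \<in> N"
  using normal.inv_op_closed1[OF N, of x n] x n m_inv_consistent[OF S x] by simp

lemma (in group) card_subgroup_dvd: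
  assumes H: "subgroup H G" and K: "subgroup K G" "K \<subseteq> H" and fin: "finite H"
  shows "card K dvd card H"
proof -
  interpret H: group "G\<lparr>carrier := H\<rparr>" by (rule subgroup_imp_group[OF H])
  have "card (rcosets\<^bsub>G\<lparr>carrier := H\<rparr>\<^esub> K) * card K = card H"
    using H.lagrange[OF subgroup_incl[OF K(1) H K(2)]] by (simp add: order_def)
  then show ?thesis by (metis dvd_triv_right)
qed

lemma (in group) exists_root_coprime:
  assumes fin: "finite (carrier G)" and cop: "coprime n (order G)" and m: "m \<in> carrier G"
  obtains u where "u \<in> carrier G" "u [^] n = m"
proof (cases "n = 0")
  case True
  then have "order G = 1" using cop by simp
  then have "carrier G = {\<one>}" using fin by (metis order_one_triv_iff)
  with m True show ?thesis by (intro that[of \<one>]) auto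
next
  case False
  obtain k q where nk: "n * k = order G * q + 1"
    using bezout_nat[OF False, of "order G"] cop by (auto simp: coprime_iff_gcd_eq_1)
  have "(m [^] k) [^] n = m [^] (order G * q) \<otimes> m"
    using m by (simp add: nat_pow_pow mult.commute[of k n] nk nat_pow_mult[symmetric])
  also have "\<dots> = m"
    using m by (simp add: nat_pow_pow[symmetric] pow_order_eq_1)
  finally show ?thesis using m by (intro that) simp_all
qed

lemma (in group) set_mult_normal:
  assumes N: "N \<lhd> G" and Y: "subgroup Y G" and NY: "N <#> Y = carrier G"
    and T: "T \<lhd> G\<lparr>carrier := Y\<rparr>"
  shows "N <#> T \<lhd> G"
proof -
  have NG: "subgroup N G" by (rule normal_imp_subgroup[OF N])
  have TY: "subgroup T (G\<lparr>carrier := Y\<rparr>)" by (rule normal_imp_subgroup[OF T])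
  have TG: "subgroup T G" by (rule incl_subgroup[OF Y TY])
  have NT: "subgroup (N <#> T) G" by (rule mult_norm_subgroup[OF N TG])
  show ?thesis
    unfolding normal_inv_iff
  proof (intro conjI ballI NT)
    fix x y assume x: "x \<in> carrier G" and "y \<in> N <#> T"
    then obtain d t where d: "d \<in> N" and t: "t \<in> T" and y: "y = d \<otimes> t"
      unfolding set_mult_def by blast
    have "x \<in> N <#> Y" using x NY by simp
    then obtain d0 h where d0: "d0 \<in> N" and h: "h \<in> Y" and xd: "x = d0 \<otimes> h"
      unfolding set_mult_def by blast
    have c: "d \<in> carrier G" "t \<in> carrier G" "d0 \<in> carrier G" "h \<in> carrier G"
      using subgroup.mem_carrier[OF NG d] subgroup.mem_carrier[OF TG t]
        subgroup.mem_carrier[OF NG d0] subgroup.mem_carrier[OF Y h] .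
    define t' where "t' = h \<otimes> t \<otimes> inv h"
    have t': "t' \<in> T"
      unfolding t'_def using normal_conj_closed[OF Y T subgroup.m_inv_closed[OF Y h] t] h c
      by (simp add: inv_inv)
    have t'c: "t' \<in> carrier G" using subgroup.mem_carrier[OF TG t'] .
    have "x \<otimes> d \<otimes> inv x \<in> N" using normal.inv_op_closed2[OF N x d] .
    moreover have "t' \<otimes> inv d0 \<otimes> inv t' \<in> N"
      using normal.inv_op_closed2[OF N t'c subgroup.m_inv_closed[OF NG d0]] .
    ultimately have "(x \<otimes> d \<otimes> inv x) \<otimes> d0 \<otimes> (t' \<otimes> inv d0 \<otimes> inv t') \<in> N"
      using d0 NG by (simp add: subgroup.m_closed)
    moreover have "x \<otimes> y \<otimes> inv x = ((x \<otimes> d \<otimes> inv x) \<otimes> d0 \<otimes> (t' \<otimes> inv d0 \<otimes> inv t')) \<otimes> t'"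
      using c x by (simp add: y xd t'_def m_assoc inv_mult_group)
    ultimately show "x \<otimes> y \<otimes> inv x \<in> N <#> T"
      using t' unfolding set_mult_def by blast
  qed
qed

lemma (in group) set_mult_inter_trivial:
  assumes N: "subgroup N G" and Y: "subgroup Y G" and NY: "N \<inter> Y = {\<one>}"
    and T: "subgroup T G" "T \<subseteq> Y" and Z: "Z \<subseteq> Y" and TZ: "T \<inter> Z = {\<one>}"
  shows "(N <#> T) \<inter> Z = {\<one>}"
proof
  have "\<one> \<otimes> \<one> \<in> N <#> T"
    unfolding set_mult_def using subgroup.one_closed[OF N] subgroup.one_closed[OF T(1)] by blast
  then show "{\<one>} \<subseteq> (N <#> T) \<inter> Z" using TZ by auto
  show "(N <#> T) \<inter> Z \<subseteq> {\<one>}"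
  proof
    fix y assume "y \<in> (N <#> T) \<inter> Z"
    then obtain d t where y: "y \<in> Z" "y = d \<otimes> t" and d: "d \<in> N" and t: "t \<in> T"
      unfolding set_mult_def by blast
    have c: "d \<in> carrier G" "t \<in> carrier G"
      using subgroup.mem_carrier[OF N d] subgroup.mem_carrier[OF T(1) t] .
    have "d = y \<otimes> inv t" using y(2) c by (simp add: m_assoc)
    moreover have "y \<otimes> inv t \<in> Y"
      using Z T(2) y(1) t subgroup.m_closed[OF Y] subgroup.m_inv_closed[OF Y] by blast
    ultimately have "d = \<one>" using d NY by blast
    then have "y \<in> T \<inter> Z" using y c t by simp
    then show "y \<in> {\<one>}" using TZ by blast
  qed
qed

section \<open>Commutator subgroups of group actions\<close>

definition fixed_points :: "('a, 'b) monoid_scheme \<Rightarrow> ('a \<Rightarrow> 'a) \<Rightarrow> 'a set" where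
  "fixed_points G f = {x \<in> carrier G. f x = x}"

lemma (in group) subgroup_fixed_points:
  assumes "f \<in> hom G G"
  shows "subgroup (fixed_points G f) G"
proof -
  interpret f: group_hom G G f
    using assms by (simp add: group_hom_def group_hom_axioms_def is_group)
  show ?thesis
    by (rule subgroupI) (auto simp: fixed_points_def)
qed

lemma (in group) subgroup_comm_act:
  assumes "S \<subseteq> carrier G" and "\<And>x y. x \<in> S \<Longrightarrow> y \<in> T \<Longrightarrow> act y x \<in> carrier G"
  shows "subgroup (comm_act G act S T) G"
  unfolding comm_act_def by (rule generate_is_subgroup) (use assms in auto)

lemma (in group) comm_act_subset:
  assumes "subgroup S G" and "\<And>x y. x \<in> S \<Longrightarrow> y \<in> T \<Longrightarrow> act y x \<in> S"
  shows "comm_act G act S T \<subseteq> S"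
  unfolding comm_act_def
  by (rule generate_subgroup_incl[OF _ assms(1)])
     (use assms in \<open>auto intro: subgroup.m_closed subgroup.m_inv_closed\<close>)

lemma (in group) comm_act_mono:
  "S \<subseteq> S' \<Longrightarrow> comm_act G act S T \<subseteq> comm_act G act S' T"
  unfolding comm_act_def by (rule mono_generate) blast

lemma (in group) comm_act_consistent:
  assumes H: "subgroup H G" and S: "S \<subseteq> H" and act: "\<And>x y. x \<in> S \<Longrightarrow> y \<in> T \<Longrightarrow> act y x \<in> H"
  shows "comm_act (G\<lparr>carrier := H\<rparr>) act S T = comm_act G act S T"
proof -
  have "(\<Union>x\<in>S. \<Union>y\<in>T. {inv\<^bsub>G\<lparr>carrier := H\<rparr>\<^esub> x \<otimes> act y x})
      = (\<Union>x\<in>S. \<Union>y\<in>T. {inv x \<otimes> act y x})"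
    using S by (intro SUP_cong) (auto simp: m_inv_consistent[OF H] subsetD[OF S])
  moreover have "(\<Union>x\<in>S. \<Union>y\<in>T. {inv x \<otimes> act y x}) \<subseteq> H"
    using S act by (auto intro!: subgroup.m_closed[OF H] subgroup.m_inv_closed[OF H])
  ultimately show ?thesis
    unfolding comm_act_def by (simp add: generate_consistent[OF _ H])
qed

lemma comm_act_hom_image:
  assumes h: "group_hom G G' h" and S: "S \<subseteq> carrier G"
    and act: "\<And>x y. x \<in> S \<Longrightarrow> y \<in> T \<Longrightarrow> act y x \<in> carrier G"
    and equivariant: "\<And>x y. x \<in> S \<Longrightarrow> y \<in> T \<Longrightarrow> h (act y x) = act' y (h x)"
  shows "h ` comm_act G act S T = comm_act G' act' (h ` S) T"
proof -
  interpret group_hom G G' h by (rule h)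
  have "h (inv\<^bsub>G\<^esub> x \<otimes>\<^bsub>G\<^esub> act y x) = inv\<^bsub>G'\<^esub> h x \<otimes>\<^bsub>G'\<^esub> act' y (h x)"
    if "x \<in> S" "y \<in> T" for x y
    using that S act equivariant by (simp add: subset_iff)
  then have "h ` (\<Union>x\<in>S. \<Union>y\<in>T. {inv\<^bsub>G\<^esub> x \<otimes>\<^bsub>G\<^esub> act y x})
      = (\<Union>x\<in>S. \<Union>y\<in>T. {inv\<^bsub>G'\<^esub> h x \<otimes>\<^bsub>G'\<^esub> act' y (h x)})"
    by (simp add: image_UN)
  also have "\<dots> = (\<Union>x\<in>h ` S. \<Union>y\<in>T. {inv\<^bsub>G'\<^esub> x \<otimes>\<^bsub>G'\<^esub> act' y x})"
    by blast
  finally have gens: "h ` (\<Union>x\<in>S. \<Union>y\<in>T. {inv\<^bsub>G\<^esub> x \<otimes>\<^bsub>G\<^esub> act y x})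
      = (\<Union>x\<in>h ` S. \<Union>y\<in>T. {inv\<^bsub>G'\<^esub> x \<otimes>\<^bsub>G'\<^esub> act' y x})" .
  have "(\<Union>x\<in>S. \<Union>y\<in>T. {inv\<^bsub>G\<^esub> x \<otimes>\<^bsub>G\<^esub> act y x}) \<subseteq> carrier G"
    using S act by auto
  from generate_img[OF this] show ?thesis
    unfolding comm_act_def gens by (rule sym)
qed

lemma (in group) comm_act_carrier_normal:
  assumes act: "\<And>y. y \<in> T \<Longrightarrow> act y \<in> hom G G"
  shows "comm_act G act (carrier G) T \<lhd> G"
proof -
  let ?S = "\<Union>x\<in>carrier G. \<Union>y\<in>T. {inv x \<otimes> act y x}"
  have act_closed: "act y x \<in> carrier G" if "y \<in> T" "x \<in> carrier G" for x y
    using hom_in_carrier[OF act[OF that(1)] that(2)] .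
  have S: "?S \<subseteq> carrier G" using act_closed by auto
  have gen: "inv t \<otimes> s \<otimes> t \<in> generate G ?S" if t: "t \<in> carrier G" and "s \<in> ?S" for s t
  proof -
    obtain a y where a: "a \<in> carrier G" and y: "y \<in> T" and s: "s = inv a \<otimes> act y a"
      using \<open>s \<in> ?S\<close> by blast
    have "act y (a \<otimes> t) = act y a \<otimes> act y t"
      using hom_mult[OF act[OF y] a t] .
    then have "inv t \<otimes> s \<otimes> t = (inv (a \<otimes> t) \<otimes> act y (a \<otimes> t)) \<otimes> inv (inv t \<otimes> act y t)"
      using a t act_closed[OF y a] act_closed[OF y t] by (simp add: s m_assoc inv_mult_group)
    moreover have "inv (a \<otimes> t) \<otimes> act y (a \<otimes> t) \<in> generate G ?S"
      by (intro generate.incl UN_I[OF m_closed[OF a t]] UN_I[OF y]) simp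
    moreover have "inv (inv t \<otimes> act y t) \<in> generate G ?S"
      by (intro generate.inv UN_I[OF t] UN_I[OF y]) simp
    ultimately show ?thesis by (simp add: generate.eng)
  qed
  show ?thesis
    unfolding comm_act_def normal_inv_iff
  proof (intro conjI ballI)
    show "subgroup (generate G ?S) G" by (rule generate_is_subgroup[OF S])
    fix g w assume g: "g \<in> carrier G" and w: "w \<in> generate G ?S"
    have "inv (inv g) \<otimes> w \<otimes> inv g \<in> generate G ?S"
      by (rule generate_conj_closed[OF S inv_closed[OF g] gen[OF inv_closed[OF g]] w])
    then show "g \<otimes> w \<otimes> inv g \<in> generate G ?S" using g by simp
  qed
qed

lemma (in group) comm_act_conj_closed:
  assumes S: "subgroup S G" and R: "R \<subseteq> carrier G" and t: "t \<in> S"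
    and w: "w \<in> comm_act G (conj_act G) S R"
  shows "inv t \<otimes> w \<otimes> t \<in> comm_act G (conj_act G) S R"
proof -
  let ?S = "\<Union>x\<in>S. \<Union>g\<in>R. {inv x \<otimes> conj_act G g x}"
  have Sc: "S \<subseteq> carrier G" by (rule subgroup.subset[OF S])
  have gens: "?S \<subseteq> carrier G"
    using Sc R by (auto simp: conj_act_def dest!: subsetD[OF Sc] subsetD[OF R])
  have tc: "t \<in> carrier G" using Sc t by blast
  have gen: "inv t \<otimes> s \<otimes> t \<in> generate G ?S" if "s \<in> ?S" for s
  proof -
    obtain x g where x: "x \<in> S" and g: "g \<in> R" and s: "s = inv x \<otimes> conj_act G g x"
      using \<open>s \<in> ?S\<close> by blast
    have "x \<in> carrier G" "g \<in> carrier G" using x g Sc R by blast+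
    then have "inv t \<otimes> s \<otimes> t = (inv (x \<otimes> t) \<otimes> conj_act G g (x \<otimes> t)) \<otimes> inv (inv t \<otimes> conj_act G g t)"
      using tc by (simp add: s conj_act_def m_assoc inv_mult_group)
    moreover have "inv (x \<otimes> t) \<otimes> conj_act G g (x \<otimes> t) \<in> generate G ?S"
      by (intro generate.incl UN_I[OF subgroup.m_closed[OF S x t]] UN_I[OF g]) simp
    moreover have "inv (inv t \<otimes> conj_act G g t) \<in> generate G ?S"
      by (intro generate.inv UN_I[OF t] UN_I[OF g]) simp
    ultimately show ?thesis by (simp add: generate.eng)
  qed
  show ?thesis
    using generate_conj_closed[OF gens tc gen] w unfolding comm_act_def by simp
qed

lemma (in group) comm_act_idem:
  assumes act: "\<And>y. y \<in> T \<Longrightarrow> act y \<in> hom G G"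
    and decomp: "\<And>y. y \<in> T \<Longrightarrow> carrier G \<subseteq> fixed_points G (act y) <#> comm_act G act (carrier G) T"
  shows "comm_act G act (comm_act G act (carrier G) T) T = comm_act G act (carrier G) T"
    (is "comm_act G act ?X T = ?X")
proof
  have act_closed: "act y x \<in> carrier G" if "y \<in> T" "x \<in> carrier G" for x y
    using hom_in_carrier[OF act[OF that(1)] that(2)] .
  have X: "subgroup ?X G" by (rule subgroup_comm_act) (use act_closed in auto)
  then show "comm_act G act ?X T \<subseteq> ?X"
    using subgroup.subset comm_act_mono by blast
  have Y: "subgroup (comm_act G act ?X T) G"
    by (rule subgroup_comm_act) (use subgroup.subset[OF X] act_closed in auto)
  show "?X \<subseteq> comm_act G act ?X T"
  proof (subst (1) comm_act_def, rule generate_subgroup_incl[OF _ Y], clarify)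
    fix b y assume b: "b \<in> carrier G" and y: "y \<in> T"
    obtain c x where c: "c \<in> carrier G" "act y c = c" and x: "x \<in> ?X" and bcx: "b = c \<otimes> x"
      using decomp[OF y] b unfolding set_mult_def fixed_points_def by blast
    have xc: "x \<in> carrier G" using subgroup.mem_carrier[OF X x] .
    have "act y b = c \<otimes> act y x" using bcx hom_mult[OF act[OF y] c(1) xc] c(2) by simp
    then have "inv b \<otimes> act y b = inv x \<otimes> act y x"
      using bcx c(1) xc act_closed[OF y xc] by (simp add: inv_mult_group m_assoc)
    moreover have "inv x \<otimes> act y x \<in> comm_act G act ?X T"
      unfolding comm_act_def[of G act ?X] by (intro generate.incl UN_I[OF x] UN_I[OF y]) simp
    ultimately show "inv b \<otimes> act y b \<in> comm_act G act ?X T" by simp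
  qed
qed

lemma comm_act_eq_of_equivariant_iso:
  assumes A: "group A" and D: "subgroup D A" and B: "group B" and E: "subgroup E B"
    and iso: "\<phi> \<in> iso (A\<lparr>carrier := D\<rparr>) (B\<lparr>carrier := E\<rparr>)"
    and D_closed: "\<And>g d. g \<in> T \<Longrightarrow> d \<in> D \<Longrightarrow> cact g d \<in> D"
    and equivariant: "\<And>g d. g \<in> T \<Longrightarrow> d \<in> D \<Longrightarrow> \<phi> (cact g d) = bact g (\<phi> d)"
    and E_eq: "comm_act B bact E T = E"
  shows "comm_act A cact D T = D"
proof -
  interpret A: group A by (rule A)
  interpret B: group B by (rule B)
  have hom: "group_hom (A\<lparr>carrier := D\<rparr>) (B\<lparr>carrier := E\<rparr>) \<phi>"
    using iso A.subgroup_imp_group[OF D] B.subgroup_imp_group[OF E]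
    by (simp add: group_hom_def group_hom_axioms_def iso_def)
  have bij: "bij_betw \<phi> D E" using iso by (simp add: iso_def)
  then have image: "\<phi> ` D = E" and inj: "inj_on \<phi> D" by (simp_all add: bij_betw_def)
  have E_closed: "bact g x \<in> E" if g: "g \<in> T" and "x \<in> E" for g x
  proof -
    obtain d where d: "d \<in> D" and "x = \<phi> d" using \<open>x \<in> E\<close> image by blast
    then have "bact g x = \<phi> (cact g d)" using equivariant[OF g d] by simp
    then show ?thesis using D_closed[OF g d] image by blast
  qed
  have "\<phi> ` comm_act A cact D T = \<phi> ` comm_act (A\<lparr>carrier := D\<rparr>) cact D T"
    using A.comm_act_consistent[where act = cact and T = T, OF D subset_refl D_closed] by simp
  also have "\<dots> = comm_act (B\<lparr>carrier := E\<rparr>) bact (\<phi> ` D) T"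
    by (rule comm_act_hom_image[OF hom]) (simp_all add: D_closed equivariant)
  also have "\<dots> = \<phi> ` D"
    using B.comm_act_consistent[where act = bact and T = T, OF E subset_refl E_closed] E_eq image by simp
  finally have "\<phi> ` comm_act A cact D T = \<phi> ` D" .
  moreover have "comm_act A cact D T \<subseteq> D" by (rule A.comm_act_subset[OF D D_closed])
  ultimately show ?thesis using inj_on_image_eq_iff[OF inj] by simp
qed

lemma (in group) comm_act_set_mult:
  assumes N: "subgroup N G" and T: "subgroup T G" and NT: "subgroup (N <#> T) G"
    and R: "R \<subseteq> carrier G"
    and closed: "\<And>g y. g \<in> R \<Longrightarrow> y \<in> N <#> T \<Longrightarrow> conj_act G g y \<in> N <#> T"
    and T_eq: "comm_act G (conj_act G) T R = T"
    and R': "R' \<subseteq> T" and N_eq: "comm_act G (conj_act G) N R' = N"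
  shows "comm_act G (conj_act G) (N <#> T) R = N <#> T"
proof
  let ?W = "comm_act G (conj_act G) (N <#> T) R"
  show "?W \<subseteq> N <#> T" by (rule comm_act_subset[OF NT closed])
  have W: "subgroup ?W G"
    by (rule subgroup_comm_act[OF subgroup.subset[OF NT]])
       (use closed subgroup.mem_carrier[OF NT] in blast)
  have one: "\<one> \<in> N" "\<one> \<in> T" using subgroup.one_closed N T by blast+
  have T_NT: "T \<subseteq> N <#> T"
    unfolding set_mult_def using one(1) subgroup.mem_carrier[OF T] by force
  have N_NT: "N \<subseteq> N <#> T"
    unfolding set_mult_def using one(2) subgroup.mem_carrier[OF N] by force
  have TW: "T \<subseteq> ?W" using comm_act_mono[OF T_NT, of "conj_act G" R] T_eq by simp
  have "N \<subseteq> ?W"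
  proof -
    have "comm_act G (conj_act G) N R' \<subseteq> ?W"
      unfolding comm_act_def[of G _ N]
    proof (rule generate_subgroup_incl[OF _ W], clarify)
      \<comment> \<open>\<open>d\<inverse> d\<^sup>g = (g\<inverse>)\<^sup>d g\<close>, and \<open>?W\<close> contains \<open>g\<close> and is normalised by \<open>N <#> T\<close>\<close>
      fix d g assume d: "d \<in> N" and g: "g \<in> R'"
      have gW: "g \<in> ?W" using R' TW g by blast
      have c: "d \<in> carrier G" "g \<in> carrier G"
        using subgroup.mem_carrier[OF N d] subgroup.mem_carrier[OF W gW] .
      have "inv d \<otimes> inv g \<otimes> d \<in> ?W"
        by (rule comm_act_conj_closed[OF NT R subsetD[OF N_NT d] subgroup.m_inv_closed[OF W gW]])
      then have "(inv d \<otimes> inv g \<otimes> d) \<otimes> g \<in> ?W" using subgroup.m_closed[OF W _ gW] by blast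
      then show "inv d \<otimes> conj_act G g d \<in> ?W" using c by (simp add: conj_act_def m_assoc)
    qed
    then show ?thesis using N_eq by simp
  qed
  then show "N <#> T \<subseteq> ?W"
    using TW subgroup.m_closed[OF W] unfolding set_mult_def by blast
qed

section \<open>Coprime action on the base group of a regular wreath product\<close>

locale wreath_base = H: group H + M: group M
  for H :: "('a, 'c) monoid_scheme" and M :: "('m, 'd) monoid_scheme"
begin

abbreviation P :: "('a \<Rightarrow> 'm) monoid" where "P \<equiv> wr_base H M"

lemma carrier_P: "carrier P = (\<Pi>\<^sub>E x\<in>carrier H. carrier M)"
  by (simp add: wr_base_def)

lemma mult_P: "f \<otimes>\<^bsub>P\<^esub> f' = (\<lambda>x\<in>carrier H. f x \<otimes>\<^bsub>M\<^esub> f' x)"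
  by (simp add: wr_base_def)

lemma one_P: "\<one>\<^bsub>P\<^esub> = (\<lambda>x\<in>carrier H. \<one>\<^bsub>M\<^esub>)"
  by (simp add: wr_base_def)

sublocale P: group P
  unfolding wr_base_def by (rule product_group) (simp add: M.is_group)

lemma inv_P: "f \<in> carrier P \<Longrightarrow> inv\<^bsub>P\<^esub> f = (\<lambda>x\<in>carrier H. inv\<^bsub>M\<^esub> f x)"
  unfolding wr_base_def by (rule inv_product_group) (auto simp: M.is_group wr_base_def)

lemma wr_act_apply [simp]: "x \<in> carrier H \<Longrightarrow> wr_act H g f x = f (x \<otimes>\<^bsub>H\<^esub> inv\<^bsub>H\<^esub> g)"
  by (simp add: wr_act_def)

lemma wr_act_closed: "g \<in> carrier H \<Longrightarrow> f \<in> carrier P \<Longrightarrow> wr_act H g f \<in> carrier P"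
  by (auto simp: wr_act_def carrier_P)

lemma wr_act_hom: "g \<in> carrier H \<Longrightarrow> wr_act H g \<in> hom P P"
  by (rule homI) (auto simp: wr_act_closed wr_act_def mult_P carrier_P)

lemma wr_act_group_hom: "g \<in> carrier H \<Longrightarrow> group_hom P P (wr_act H g)"
  by (simp add: group_hom_def group_hom_axioms_def P.is_group wr_act_hom)

lemma wr_act_comp:
  "g \<in> carrier H \<Longrightarrow> h \<in> carrier H \<Longrightarrow> f \<in> carrier P \<Longrightarrow>
    wr_act H g (wr_act H h f) = wr_act H (h \<otimes>\<^bsub>H\<^esub> g) f"
  by (auto simp: wr_act_def H.inv_mult_group H.m_assoc carrier_P)

lemma wr_act_one: "f \<in> carrier P \<Longrightarrow> wr_act H \<one>\<^bsub>H\<^esub> f = f"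
  by (auto simp: wr_act_def extensional_def carrier_P PiE_iff)

lemma wr_act_inv_cancel: "g \<in> carrier H \<Longrightarrow> f \<in> carrier P \<Longrightarrow> wr_act H g (wr_act H (inv\<^bsub>H\<^esub> g) f) = f"
  by (simp add: wr_act_comp wr_act_one)

lemma wr_act_image:
  assumes g: "g \<in> carrier H"
  shows "wr_act H g ` carrier P = carrier P"
proof
  show "wr_act H g ` carrier P \<subseteq> carrier P" using wr_act_closed[OF g] by blast
  show "carrier P \<subseteq> wr_act H g ` carrier P"
  proof
    fix f assume f: "f \<in> carrier P"
    then have "f = wr_act H g (wr_act H (inv\<^bsub>H\<^esub> g) f)" by (simp add: wr_act_inv_cancel[OF g])
    then show "f \<in> wr_act H g ` carrier P" using wr_act_closed[OF H.inv_closed[OF g] f] by blast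
  qed
qed

definition coord :: "'a \<Rightarrow> 'm \<Rightarrow> ('a \<Rightarrow> 'm)" where
  "coord y m = (\<lambda>x\<in>carrier H. if x = y then m else \<one>\<^bsub>M\<^esub>)"

definition const_on :: "'a set \<Rightarrow> 'm \<Rightarrow> ('a \<Rightarrow> 'm)" where
  "const_on S u = (\<lambda>x\<in>carrier H. if x \<in> S then u else \<one>\<^bsub>M\<^esub>)"

lemma coord_closed: "m \<in> carrier M \<Longrightarrow> coord y m \<in> carrier P"
  by (auto simp: coord_def carrier_P)

lemma const_on_closed: "u \<in> carrier M \<Longrightarrow> const_on S u \<in> carrier P"
  by (auto simp: const_on_def carrier_P)

lemma coord_mult: "a \<in> carrier M \<Longrightarrow> b \<in> carrier M \<Longrightarrow> coord y a \<otimes>\<^bsub>P\<^esub> coord y b = coord y (a \<otimes>\<^bsub>M\<^esub> b)"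
  by (auto simp: coord_def mult_P)

lemma coord_one: "coord y \<one>\<^bsub>M\<^esub> = \<one>\<^bsub>P\<^esub>"
  by (auto simp: coord_def one_P)

lemma coord_pow: "a \<in> carrier M \<Longrightarrow> coord y a [^]\<^bsub>P\<^esub> (n::nat) = coord y (a [^]\<^bsub>M\<^esub> n)"
  by (induct n) (simp_all add: coord_one coord_mult)

lemma wr_act_coord:
  assumes "h \<in> carrier H" "y \<in> carrier H"
  shows "wr_act H h (coord y m) = coord (y \<otimes>\<^bsub>H\<^esub> h) m"
  using H.inv_solve_right'[OF assms(2) _ assms(1)] assms(1)
  by (auto simp: wr_act_def coord_def)

lemma const_on_empty: "const_on {} u = \<one>\<^bsub>P\<^esub>"
  by (simp add: const_on_def one_P)

lemma const_on_insert:
  "z \<notin> S \<Longrightarrow> u \<in> carrier M \<Longrightarrow> const_on (insert z S) u = const_on S u \<otimes>\<^bsub>P\<^esub> coord z u"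
  by (auto simp: const_on_def coord_def mult_P)

lemma wr_act_const_on_lcoset:
  assumes C: "subgroup C H" and g: "g \<in> C" and y: "y \<in> carrier H"
  shows "wr_act H g (const_on (y <#\<^bsub>H\<^esub> C) u) = const_on (y <#\<^bsub>H\<^esub> C) u"
proof -
  have gH: "g \<in> carrier H" using subgroup.mem_carrier[OF C g] .
  have "x \<otimes>\<^bsub>H\<^esub> inv\<^bsub>H\<^esub> g \<in> y <#\<^bsub>H\<^esub> C \<longleftrightarrow> x \<in> y <#\<^bsub>H\<^esub> C" if x: "x \<in> carrier H" for x
  proof
    assume "x \<otimes>\<^bsub>H\<^esub> inv\<^bsub>H\<^esub> g \<in> y <#\<^bsub>H\<^esub> C"
    then obtain c where c: "c \<in> C" "x \<otimes>\<^bsub>H\<^esub> inv\<^bsub>H\<^esub> g = y \<otimes>\<^bsub>H\<^esub> c"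
      unfolding l_coset_def by blast
    then have "x = y \<otimes>\<^bsub>H\<^esub> (c \<otimes>\<^bsub>H\<^esub> g)"
      using x y gH subgroup.mem_carrier[OF C c(1)] by (simp add: H.inv_solve_right' H.m_assoc)
    then show "x \<in> y <#\<^bsub>H\<^esub> C"
      unfolding l_coset_def using subgroup.m_closed[OF C c(1) g] by blast
  next
    assume "x \<in> y <#\<^bsub>H\<^esub> C"
    then obtain c where c: "c \<in> C" "x = y \<otimes>\<^bsub>H\<^esub> c"
      unfolding l_coset_def by blast
    then have "x \<otimes>\<^bsub>H\<^esub> inv\<^bsub>H\<^esub> g = y \<otimes>\<^bsub>H\<^esub> (c \<otimes>\<^bsub>H\<^esub> inv\<^bsub>H\<^esub> g)"
      using y gH subgroup.mem_carrier[OF C c(1)] by (simp add: H.m_assoc)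
    then show "x \<otimes>\<^bsub>H\<^esub> inv\<^bsub>H\<^esub> g \<in> y <#\<^bsub>H\<^esub> C"
      unfolding l_coset_def using subgroup.m_closed[OF C c(1) subgroup.m_inv_closed[OF C g]] by blast
  qed
  then show ?thesis using gH by (auto simp: wr_act_def const_on_def intro!: restrict_ext)
qed

lemma generate_coords:
  assumes fin: "finite (carrier H)"
  shows "generate P (\<Union>y\<in>carrier H. \<Union>m\<in>carrier M. {coord y m}) = carrier P"
    (is "generate P ?E = _")
proof
  have E: "?E \<subseteq> carrier P" using coord_closed by auto
  then show "generate P ?E \<subseteq> carrier P" using P.generate_in_carrier by blast
  show "carrier P \<subseteq> generate P ?E"
  proof
    fix f assume f: "f \<in> carrier P"
    have restriction: "(\<lambda>x\<in>carrier H. if x \<in> S then f x else \<one>\<^bsub>M\<^esub>) \<in> generate P ?E"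
      if "finite S" "S \<subseteq> carrier H" for S
      using that
    proof (induct S rule: finite_induct)
      case empty
      then show ?case using generate.one[of P ?E] by (simp add: one_P restrict_def)
    next
      case (insert y S)
      have fy: "f y \<in> carrier M" using f insert(4) by (auto simp: carrier_P)
      have "(\<lambda>x\<in>carrier H. if x \<in> insert y S then f x else \<one>\<^bsub>M\<^esub>)
          = (\<lambda>x\<in>carrier H. if x \<in> S then f x else \<one>\<^bsub>M\<^esub>) \<otimes>\<^bsub>P\<^esub> coord y (f y)"
        using f insert(2) by (auto simp: coord_def mult_P carrier_P PiE_iff intro!: restrict_ext)
      moreover have "(\<lambda>x\<in>carrier H. if x \<in> S then f x else \<one>\<^bsub>M\<^esub>) \<in> generate P ?E"
        by (rule insert(3)) (use insert(4) in simp)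
      moreover have "coord y (f y) \<in> generate P ?E"
        by (intro generate.incl UN_I[of y] UN_I[OF fy]) (use insert(4) in simp_all)
      ultimately show ?case by (simp only: generate.eng)
    qed
    have "(\<lambda>x\<in>carrier H. if x \<in> carrier H then f x else \<one>\<^bsub>M\<^esub>) = restrict f (carrier H)"
      by (rule restrict_ext) simp
    also have "\<dots> = f" using f by (simp add: carrier_P PiE_restrict)
    finally have "(\<lambda>x\<in>carrier H. if x \<in> carrier H then f x else \<one>\<^bsub>M\<^esub>) = f" .
    with restriction[OF fin subset_refl] show "f \<in> generate P ?E" by simp
  qed
qed

lemma normal_comm_act_wr_base:
  "T \<subseteq> carrier H \<Longrightarrow> comm_act P (wr_act H) (carrier P) T \<lhd> P"
  by (rule P.comm_act_carrier_normal) (use wr_act_hom in blast)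

lemma const_on_congruent_coord_pow:
  assumes T: "T \<subseteq> carrier H" and C: "subgroup C H" "C \<subseteq> T"
    and y: "y \<in> carrier H" and u: "u \<in> carrier M"
    and S: "finite S" "S \<subseteq> y <#\<^bsub>H\<^esub> C"
  shows "\<exists>x \<in> comm_act P (wr_act H) (carrier P) T.
           const_on S u = coord y u [^]\<^bsub>P\<^esub> card S \<otimes>\<^bsub>P\<^esub> x"
proof -
  \<comment> \<open>modulo the normal subgroup \<open>[P, T]\<close>, the translate \<open>coord (y c) u = (coord y u)\<^sup>c\<close> equals \<open>coord y u\<close>\<close>
  let ?X = "comm_act P (wr_act H) (carrier P) T"
  let ?e = "coord y u"
  have X: "?X \<lhd> P" by (rule normal_comm_act_wr_base[OF T])
  have e: "?e \<in> carrier P" by (rule coord_closed[OF u])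
  show ?thesis
    using S
  proof (induct S rule: finite_induct)
    case empty
    show ?case
      using subgroup.one_closed[OF normal_imp_subgroup[OF X]]
      by (intro bexI[of _ "\<one>\<^bsub>P\<^esub>"]) (simp_all add: const_on_empty)
  next
    case (insert z S)
    obtain x where x: "x \<in> ?X" and Su: "const_on S u = ?e [^]\<^bsub>P\<^esub> card S \<otimes>\<^bsub>P\<^esub> x"
      using insert(3,4) by auto
    obtain c where c: "c \<in> C" and z: "z = y \<otimes>\<^bsub>H\<^esub> c"
      using insert(4) unfolding l_coset_def by blast
    have cT: "c \<in> T" and cH: "c \<in> carrier H" using c C T by auto
    define s where "s = inv\<^bsub>P\<^esub> ?e \<otimes>\<^bsub>P\<^esub> wr_act H c ?e"
    have s: "s \<in> ?X"
      unfolding s_def comm_act_def by (intro generate.incl UN_I[OF e] UN_I[OF cT]) simp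
    have xc: "x \<in> carrier P" and sc: "s \<in> carrier P"
      using subgroup.mem_carrier[OF normal_imp_subgroup[OF X]] x s by auto
    have "coord z u = ?e \<otimes>\<^bsub>P\<^esub> s"
      using wr_act_closed[OF cH e] e by (simp add: s_def z wr_act_coord[OF cH y])
    then have "const_on (insert z S) u
        = ?e [^]\<^bsub>P\<^esub> card S \<otimes>\<^bsub>P\<^esub> ?e \<otimes>\<^bsub>P\<^esub> ((inv\<^bsub>P\<^esub> ?e \<otimes>\<^bsub>P\<^esub> x \<otimes>\<^bsub>P\<^esub> ?e) \<otimes>\<^bsub>P\<^esub> s)"
      using e xc sc by (simp add: const_on_insert[OF insert(2) u] Su P.m_assoc)
    also have "?e [^]\<^bsub>P\<^esub> card S \<otimes>\<^bsub>P\<^esub> ?e = ?e [^]\<^bsub>P\<^esub> card (insert z S)"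
      using insert(1,2) by simp
    moreover have "(inv\<^bsub>P\<^esub> ?e \<otimes>\<^bsub>P\<^esub> x \<otimes>\<^bsub>P\<^esub> ?e) \<otimes>\<^bsub>P\<^esub> s \<in> ?X"
      using subgroup.m_closed[OF normal_imp_subgroup[OF X] normal.inv_op_closed1[OF X e x] s] .
    ultimately show ?case by (intro bexI) simp_all
  qed
qed

lemma coord_in_fixed_points_comm_act:
  assumes finH: "finite (carrier H)" and finM: "finite (carrier M)"
    and T: "subgroup T H" and g: "g \<in> T"
    and cop: "coprime (card T) (card (carrier M))"
    and y: "y \<in> carrier H" and m: "m \<in> carrier M"
  shows "coord y m \<in> fixed_points P (wr_act H g) <#>\<^bsub>P\<^esub> comm_act P (wr_act H) (carrier P) T"
proof -
  \<comment> \<open>with \<open>u\<^bsup>ord g\<^esup> = m\<close>, the function with value \<open>u\<close> on the orbit \<open>y \<langle>g\<rangle>\<close> is fixed by \<open>g\<close>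
     and congruent to \<open>(coord y u)\<^bsup>ord g\<^esup> = coord y m\<close>\<close>
  let ?X = "comm_act P (wr_act H) (carrier P) T"
  let ?C = "generate H {g}"
  let ?O = "y <#\<^bsub>H\<^esub> ?C"
  have gH: "g \<in> carrier H" using subgroup.mem_carrier[OF T g] .
  have C: "subgroup ?C H" "?C \<subseteq> T"
    using H.generate_is_subgroup[of "{g}"] H.generate_subgroup_incl[OF _ T] gH g by auto
  have TH: "T \<subseteq> carrier H" using subgroup.subset[OF T] .
  have "card ?C dvd card T"
    using H.card_subgroup_dvd[OF T C(1) C(2)] finite_subset[OF subgroup.subset[OF T] finH] .
  then obtain k where "card T = H.ord g * k"
    using H.generate_pow_card[OF gH] by (auto elim: dvdE)
  then have "coprime (H.ord g) (card (carrier M))" using cop by simp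
  then obtain u where u: "u \<in> carrier M" and un: "u [^]\<^bsub>M\<^esub> H.ord g = m"
    using M.exists_root_coprime[OF finM _ m] by (auto simp: order_def)
  have "?O = (\<lambda>h. y \<otimes>\<^bsub>H\<^esub> h) ` ?C" by (auto simp: l_coset_def)
  then have "card ?O = card ?C"
    using H.inj_on_cmult[OF y] subgroup.subset[OF C(1)] by (simp add: card_image inj_on_subset)
  also have "\<dots> = H.ord g" using H.generate_pow_card[OF gH] by simp
  finally have cardO: "card ?O = H.ord g" .
  have finO: "finite ?O" by (rule finite_subset[OF H.l_coset_subset_G[OF subgroup.subset[OF C(1)] y] finH])
  obtain x where x: "x \<in> ?X" and Ou: "const_on ?O u = coord y u [^]\<^bsub>P\<^esub> card ?O \<otimes>\<^bsub>P\<^esub> x"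
    using const_on_congruent_coord_pow[OF TH C y u finO subset_refl] by blast
  have X: "subgroup ?X P" using normal_imp_subgroup[OF normal_comm_act_wr_base[OF TH]] .
  have xc: "x \<in> carrier P" using subgroup.mem_carrier[OF X x] .
  have "coord y m = const_on ?O u \<otimes>\<^bsub>P\<^esub> inv\<^bsub>P\<^esub> x"
    using xc coord_closed[OF m] by (simp add: Ou cardO coord_pow[OF u] un P.m_assoc)
  moreover have "const_on ?O u \<in> fixed_points P (wr_act H g)"
    using wr_act_const_on_lcoset[OF C(1) _ y] const_on_closed[OF u] generate.incl[of g "{g}" H]
    by (simp add: fixed_points_def)
  moreover have "inv\<^bsub>P\<^esub> x \<in> ?X" using subgroup.m_inv_closed[OF X x] .
  ultimately show ?thesis unfolding set_mult_def by auto
qed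

lemma carrier_wr_base_decomposition:
  assumes finH: "finite (carrier H)" and finM: "finite (carrier M)"
    and T: "subgroup T H" and g: "g \<in> T"
    and cop: "coprime (card T) (card (carrier M))"
  shows "carrier P \<subseteq> fixed_points P (wr_act H g) <#>\<^bsub>P\<^esub> comm_act P (wr_act H) (carrier P) T"
proof -
  let ?X = "comm_act P (wr_act H) (carrier P) T"
  let ?F = "fixed_points P (wr_act H g)"
  have gH: "g \<in> carrier H" using subgroup.mem_carrier[OF T g] .
  have X: "?X \<lhd> P" by (rule normal_comm_act_wr_base[OF subgroup.subset[OF T]])
  have F: "subgroup ?F P" by (rule P.subgroup_fixed_points[OF wr_act_hom[OF gH]])
  have "subgroup (?F <#>\<^bsub>P\<^esub> ?X) P"
    using P.mult_norm_subgroup[OF X F] P.commut_normal[OF F X] by simp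
  moreover have "(\<Union>y\<in>carrier H. \<Union>m\<in>carrier M. {coord y m}) \<subseteq> ?F <#>\<^bsub>P\<^esub> ?X"
    using coord_in_fixed_points_comm_act[OF finH finM T g cop] by auto
  ultimately show ?thesis
    using P.generate_subgroup_incl generate_coords[OF finH] by metis
qed

end

section \<open>The quotient of the base group by \<open>[P', H]\<close>\<close>

text \<open>The extra-special hypothesis \<open>M' = Z(M)\<close> is used only to make \<open>[P', H]\<close> central, hence normal.\<close>

locale wreath_quotient = wreath_base H M
  for H :: "('a, 'c) monoid_scheme" and M :: "('m, 'd) monoid_scheme" +
  assumes derived_eq_center: "derived M (carrier M) = group_center M"
begin

definition center_coords :: "('a \<Rightarrow> 'm) set" where
  "center_coords = (\<Pi>\<^sub>E x\<in>carrier H. group_center M)"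

abbreviation K :: "('a \<Rightarrow> 'm) set" where "K \<equiv> wr_kernel H M"

lemma subgroup_center_coords: "subgroup center_coords P"
proof -
  have "subgroup (group_center M) M"
    using M.derived_is_subgroup[of "carrier M"] derived_eq_center by simp
  then show ?thesis
    unfolding center_coords_def wr_base_def
    by (subst PiE_subgroup_product_group) (auto simp: M.is_group)
qed

lemma center_coords_commute: "z \<in> center_coords \<Longrightarrow> f \<in> carrier P \<Longrightarrow> z \<otimes>\<^bsub>P\<^esub> f = f \<otimes>\<^bsub>P\<^esub> z"
  by (auto simp: center_coords_def mult_P group_center_def PiE_iff carrier_P intro!: restrict_ext)

lemma wr_act_center_coords: "g \<in> carrier H \<Longrightarrow> z \<in> center_coords \<Longrightarrow> wr_act H g z \<in> center_coords"
  by (auto simp: center_coords_def wr_act_def PiE_iff)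

lemma derived_subset_center_coords: "derived P (carrier P) \<subseteq> center_coords"
  unfolding derived_def
proof (rule P.generate_subgroup_incl[OF _ subgroup_center_coords], clarify)
  fix a b assume a: "a \<in> carrier P" and b: "b \<in> carrier P"
  have "a x \<otimes>\<^bsub>M\<^esub> b x \<otimes>\<^bsub>M\<^esub> inv\<^bsub>M\<^esub> a x \<otimes>\<^bsub>M\<^esub> inv\<^bsub>M\<^esub> b x \<in> group_center M"
    if x: "x \<in> carrier H" for x
  proof -
    have "a x \<in> carrier M" "b x \<in> carrier M" using a b x by (auto simp: carrier_P)
    then have "a x \<otimes>\<^bsub>M\<^esub> b x \<otimes>\<^bsub>M\<^esub> inv\<^bsub>M\<^esub> a x \<otimes>\<^bsub>M\<^esub> inv\<^bsub>M\<^esub> b x \<in> derived M (carrier M)"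
      unfolding derived_def by (intro generate.incl) blast
    then show ?thesis using derived_eq_center by simp
  qed
  then show "a \<otimes>\<^bsub>P\<^esub> b \<otimes>\<^bsub>P\<^esub> inv\<^bsub>P\<^esub> a \<otimes>\<^bsub>P\<^esub> inv\<^bsub>P\<^esub> b \<in> center_coords"
    using a b by (simp add: center_coords_def inv_P mult_P)
qed

lemma wr_kernel_subset_center_coords: "K \<subseteq> center_coords"
  unfolding wr_kernel_def comm_act_def
proof (rule P.generate_subgroup_incl[OF _ subgroup_center_coords], clarify)
  fix x h assume "x \<in> derived P (carrier P)" and h: "h \<in> carrier H"
  then have x: "x \<in> center_coords" using derived_subset_center_coords by blast
  show "inv\<^bsub>P\<^esub> x \<otimes>\<^bsub>P\<^esub> wr_act H h x \<in> center_coords"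
    using subgroup.m_closed[OF subgroup_center_coords subgroup.m_inv_closed[OF subgroup_center_coords x]
        wr_act_center_coords[OF h x]] .
qed

lemma normal_wr_kernel: "K \<lhd> P"
proof -
  have K: "subgroup K P"
    unfolding wr_kernel_def
    by (rule P.subgroup_comm_act[OF P.derived_in_carrier[OF subset_refl]])
       (use wr_act_closed P.derived_in_carrier[OF subset_refl] in blast)
  show ?thesis
  proof (rule P.normal_invI[OF K])
    fix f k assume f: "f \<in> carrier P" and k: "k \<in> K"
    have kP: "k \<in> carrier P" using subgroup.mem_carrier[OF K k] .
    have "f \<otimes>\<^bsub>P\<^esub> k \<otimes>\<^bsub>P\<^esub> inv\<^bsub>P\<^esub> f = k \<otimes>\<^bsub>P\<^esub> f \<otimes>\<^bsub>P\<^esub> inv\<^bsub>P\<^esub> f"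
      using center_coords_commute[OF subsetD[OF wr_kernel_subset_center_coords k] f] by simp
    also have "\<dots> = k" using f kP by (simp add: P.m_assoc)
    finally have "f \<otimes>\<^bsub>P\<^esub> k \<otimes>\<^bsub>P\<^esub> inv\<^bsub>P\<^esub> f = k" .
    then show "f \<otimes>\<^bsub>P\<^esub> k \<otimes>\<^bsub>P\<^esub> inv\<^bsub>P\<^esub> f \<in> K" using k by simp
  qed
qed

lemma wr_act_wr_kernel_subset:
  assumes g: "g \<in> carrier H"
  shows "wr_act H g ` K \<subseteq> K"
proof -
  let ?D = "derived P (carrier P)"
  let ?S = "\<Union>x\<in>?D. \<Union>h\<in>carrier H. {inv\<^bsub>P\<^esub> x \<otimes>\<^bsub>P\<^esub> wr_act H h x}"
  interpret g: group_hom P P "wr_act H g" by (rule wr_act_group_hom[OF g])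
  have D: "?D \<subseteq> carrier P" by (rule P.derived_in_carrier[OF subset_refl])
  have D_closed: "wr_act H g ` ?D = ?D"
    using g.derived_img[OF subset_refl] wr_act_image[OF g] by simp
  have S: "?S \<subseteq> carrier P" using D wr_act_closed by blast
  have "wr_act H g ` ?S \<subseteq> ?S"
  proof clarify
    fix x h assume x: "x \<in> ?D" and h: "h \<in> carrier H"
    have xP: "x \<in> carrier P" using D x by blast
    define h' where "h' = inv\<^bsub>H\<^esub> g \<otimes>\<^bsub>H\<^esub> h \<otimes>\<^bsub>H\<^esub> g"
    have h': "h' \<in> carrier H" using g h by (simp add: h'_def)
    have "wr_act H h' (wr_act H g x) = wr_act H (g \<otimes>\<^bsub>H\<^esub> h') x"
      by (rule wr_act_comp[OF h' g xP])
    also have "g \<otimes>\<^bsub>H\<^esub> h' = h \<otimes>\<^bsub>H\<^esub> g"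
      using g h by (simp add: h'_def H.m_assoc[symmetric])
    finally have "wr_act H h' (wr_act H g x) = wr_act H g (wr_act H h x)"
      using wr_act_comp[OF g h xP] by simp
    then have "wr_act H g (inv\<^bsub>P\<^esub> x \<otimes>\<^bsub>P\<^esub> wr_act H h x)
        = inv\<^bsub>P\<^esub> (wr_act H g x) \<otimes>\<^bsub>P\<^esub> wr_act H h' (wr_act H g x)"
      using xP wr_act_closed[OF h xP] by simp
    moreover have "wr_act H g x \<in> ?D" using D_closed x by blast
    ultimately show "wr_act H g (inv\<^bsub>P\<^esub> x \<otimes>\<^bsub>P\<^esub> wr_act H h x) \<in> ?S"
      using h' by blast
  qed
  then have "generate P (wr_act H g ` ?S) \<subseteq> K"
    unfolding wr_kernel_def comm_act_def by (rule P.mono_generate)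
  then show ?thesis
    unfolding wr_kernel_def comm_act_def using g.generate_img[OF S] by simp
qed

lemma wr_act_wr_kernel:
  assumes g: "g \<in> carrier H"
  shows "wr_act H g ` K = K"
proof
  show "wr_act H g ` K \<subseteq> K" by (rule wr_act_wr_kernel_subset[OF g])
  show "K \<subseteq> wr_act H g ` K"
  proof
    fix k assume k: "k \<in> K"
    then have "k = wr_act H g (wr_act H (inv\<^bsub>H\<^esub> g) k)"
      using wr_act_inv_cancel[OF g] subgroup.mem_carrier[OF normal_imp_subgroup[OF normal_wr_kernel] k]
      by simp
    moreover have "wr_act H (inv\<^bsub>H\<^esub> g) k \<in> K"
      using wr_act_wr_kernel_subset[OF H.inv_closed[OF g]] k by blast
    ultimately show "k \<in> wr_act H g ` K" by (rule image_eqI)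
  qed
qed

abbreviation B :: "('a \<Rightarrow> 'm) set monoid" where "B \<equiv> quot_base H M"

sublocale B: group B
  unfolding quot_base_def by (rule normal.factorgroup_is_group[OF normal_wr_kernel])

lemma coset_hom: "(\<lambda>f. K #>\<^bsub>P\<^esub> f) \<in> hom P B"
  unfolding quot_base_def by (rule normal.r_coset_hom_Mod[OF normal_wr_kernel])

lemma coset_group_hom: "group_hom P B (\<lambda>f. K #>\<^bsub>P\<^esub> f)"
  using coset_hom by (simp add: group_hom_def group_hom_axioms_def P.is_group B.is_group)

lemma coset_image: "(\<lambda>f. K #>\<^bsub>P\<^esub> f) ` carrier P = carrier B"
  by (auto simp: quot_base_def FactGroup_def RCOSETS_def)

lemma quot_act_coset:
  assumes g: "g \<in> carrier H" and f: "f \<in> carrier P"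
  shows "quot_act H g (K #>\<^bsub>P\<^esub> f) = K #>\<^bsub>P\<^esub> wr_act H g f"
proof -
  have "quot_act H g (K #>\<^bsub>P\<^esub> f) = (\<lambda>k. wr_act H g (k \<otimes>\<^bsub>P\<^esub> f)) ` K"
    by (auto simp: quot_act_def r_coset_def)
  also have "\<dots> = (\<lambda>k. wr_act H g k \<otimes>\<^bsub>P\<^esub> wr_act H g f) ` K"
    using subgroup.mem_carrier[OF normal_imp_subgroup[OF normal_wr_kernel]]
      hom_mult[OF wr_act_hom[OF g] _ f] by (intro image_cong) simp_all
  also have "\<dots> = (\<lambda>k. k \<otimes>\<^bsub>P\<^esub> wr_act H g f) ` (wr_act H g ` K)" by (rule image_image[symmetric])
  also have "\<dots> = K #>\<^bsub>P\<^esub> wr_act H g f"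
    by (auto simp: wr_act_wr_kernel[OF g] r_coset_def)
  finally show ?thesis .
qed

lemma quot_act_hom:
  assumes g: "g \<in> carrier H"
  shows "quot_act H g \<in> hom B B"
proof -
  interpret \<pi>: group_hom P B "\<lambda>f. K #>\<^bsub>P\<^esub> f" by (rule coset_group_hom)
  show ?thesis
  proof (rule homI)
    fix b assume "b \<in> carrier B"
    then obtain f where f: "f \<in> carrier P" "b = K #>\<^bsub>P\<^esub> f" using coset_image by blast
    then have "quot_act H g b = K #>\<^bsub>P\<^esub> wr_act H g f" using quot_act_coset[OF g f(1)] by simp
    then show "quot_act H g b \<in> carrier B" using \<pi>.hom_closed[OF wr_act_closed[OF g f(1)]] by (rule ssubst)
  next
    fix b b' assume b: "b \<in> carrier B" and b': "b' \<in> carrier B"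
    obtain f where f: "f \<in> carrier P" "b = K #>\<^bsub>P\<^esub> f"
      using b coset_image by blast
    obtain f' where f': "f' \<in> carrier P" "b' = K #>\<^bsub>P\<^esub> f'"
      using b' coset_image by blast
    have "quot_act H g (b \<otimes>\<^bsub>B\<^esub> b') = quot_act H g (K #>\<^bsub>P\<^esub> (f \<otimes>\<^bsub>P\<^esub> f'))"
      using \<pi>.hom_mult[OF f(1) f'(1)] f(2) f'(2) by simp
    also have "\<dots> = K #>\<^bsub>P\<^esub> (wr_act H g f \<otimes>\<^bsub>P\<^esub> wr_act H g f')"
      using quot_act_coset[OF g P.m_closed[OF f(1) f'(1)]] hom_mult[OF wr_act_hom[OF g] f(1) f'(1)]
      by simp
    also have "\<dots> = quot_act H g b \<otimes>\<^bsub>B\<^esub> quot_act H g b'"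
      using \<pi>.hom_mult[OF wr_act_closed[OF g f(1)] wr_act_closed[OF g f'(1)]]
        quot_act_coset[OF g f(1)] quot_act_coset[OF g f'(1)] f(2) f'(2) by simp
    finally show "quot_act H g (b \<otimes>\<^bsub>B\<^esub> b') = quot_act H g b \<otimes>\<^bsub>B\<^esub> quot_act H g b'" .
  qed
qed

lemma comm_act_quot_base_idem:
  assumes finH: "finite (carrier H)" and finM: "finite (carrier M)" and T: "subgroup T H"
    and cop: "coprime (card T) (card (carrier M))"
  shows "comm_act B (quot_act H) (comm_act B (quot_act H) (carrier B) T) T
       = comm_act B (quot_act H) (carrier B) T"
proof -
  let ?\<pi> = "\<lambda>f. K #>\<^bsub>P\<^esub> f"
  let ?X = "comm_act P (wr_act H) (carrier P) T"
  have TH: "\<And>g. g \<in> T \<Longrightarrow> g \<in> carrier H" using subgroup.mem_carrier[OF T] .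
  have X: "?X \<subseteq> carrier P"
    using subgroup.subset[OF normal_imp_subgroup[OF normal_comm_act_wr_base[OF subgroup.subset[OF T]]]] .
  have equivariant: "?\<pi> (wr_act H g f) = quot_act H g (?\<pi> f)" if "f \<in> carrier P" "g \<in> T" for f g
    using quot_act_coset[OF TH[OF that(2)] that(1)] by simp
  have image_X: "?\<pi> ` ?X = comm_act B (quot_act H) (carrier B) T"
    using comm_act_hom_image[OF coset_group_hom subset_refl, of T "wr_act H" "quot_act H"]
      wr_act_closed TH equivariant coset_image by simp
  have "?\<pi> ` comm_act P (wr_act H) ?X T = comm_act B (quot_act H) (?\<pi> ` ?X) T"
    using comm_act_hom_image[OF coset_group_hom X, of T "wr_act H" "quot_act H"]
      wr_act_closed TH equivariant X by (simp add: subset_iff)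
  moreover have "comm_act P (wr_act H) ?X T = ?X"
    by (rule P.comm_act_idem) (use wr_act_hom TH carrier_wr_base_decomposition[OF finH finM T _ cop] in auto)
  ultimately show ?thesis using image_X by simp
qed

lemma card_quot_base_dvd:
  assumes finH: "finite (carrier H)" and finM: "finite (carrier M)"
  shows "finite (carrier B)" "card (carrier B) dvd card (carrier M) ^ card (carrier H)"
proof -
  have finP: "finite (carrier P)" using finH finM by (simp add: carrier_P finite_PiE)
  then show "finite (carrier B)" unfolding coset_image[symmetric] by (rule finite_imageI)
  have "card (carrier B) * card K = order P"
    using P.lagrange[OF normal_imp_subgroup[OF normal_wr_kernel]]
    by (simp add: quot_base_def FactGroup_def)
  moreover have "order P = card (carrier M) ^ card (carrier H)"
    using finH by (simp add: order_def carrier_P card_PiE)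
  ultimately show "card (carrier B) dvd card (carrier M) ^ card (carrier H)"
    by (metis dvd_triv_left)
qed

end

section \<open>The tower of groups\<close>

locale tower =
  fixes p :: "nat \<Rightarrow> nat" and M :: "nat \<Rightarrow> ('m, 'd) monoid_scheme"
    and A :: "('a, 'c) monoid_scheme" and Gc D R :: "nat \<Rightarrow> 'a set"
  assumes construction: "construction p M A Gc D R"
begin

lemma group_A: "group A"
  using construction by (simp add: construction_def)

sublocale A: group A by (rule group_A)

lemma prime_p: "i \<ge> 1 \<Longrightarrow> Factorial_Ring.prime (p i)"
  using construction by (simp add: construction_def)

lemma p_Suc_neq: "i \<ge> 1 \<Longrightarrow> p (Suc i) \<noteq> p i"
  using construction by (simp add: construction_def)

lemma extra_special_M: "i \<ge> 2 \<Longrightarrow> extra_special (p i) (M i)"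
  and card_M: "i \<ge> 2 \<Longrightarrow> card (carrier (M i)) = p i ^ 3"
  using construction by (simp_all add: construction_def)

lemma subgroup_Gc_1: "subgroup (Gc 1) A"
  and card_Gc_1: "card (Gc 1) = p 1"
  and R_1: "R 1 = Gc 1"
  using construction by (simp_all add: construction_def)

lemma construction_step:
  assumes "i \<ge> 2"
  shows subgroup_Gc_step: "subgroup (Gc i) A"
    and Gc_pred_subset: "Gc (i - 1) \<subseteq> Gc i"
    and normal_D: "D i \<lhd> A\<lparr>carrier := Gc i\<rparr>"
    and D_inter_Gc: "D i \<inter> Gc (i - 1) = {\<one>\<^bsub>A\<^esub>}"
    and D_mult_Gc: "D i <#>\<^bsub>A\<^esub> Gc (i - 1) = Gc i"
    and D_equivariant_iso: "\<exists>\<phi>. \<phi> \<in> iso (A\<lparr>carrier := D i\<rparr>)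
                   (D_concrete (A\<lparr>carrier := Gc (i - 1)\<rparr>) (R (i - 1)) (M i))
             \<and> (\<forall>g \<in> Gc (i - 1). \<forall>d \<in> D i.
                  \<phi> (conj_act A g d) = quot_act (A\<lparr>carrier := Gc (i - 1)\<rparr>) g (\<phi> d))"
    and R_derived: "R i = derived A (D i)"
  using construction assms unfolding construction_def by simp_all

lemma subgroup_Gc: "i \<ge> 1 \<Longrightarrow> subgroup (Gc i) A"
  using subgroup_Gc_1 subgroup_Gc_step by (cases "i = 1") auto

lemma Gc_mono: "1 \<le> a \<Longrightarrow> a \<le> b \<Longrightarrow> Gc a \<subseteq> Gc b"
proof (induct b)
  case (Suc b)
  then show ?case using Gc_pred_subset[of "Suc b"] by (cases "a = Suc b") auto
qed simp

lemma subgroup_D: "i \<ge> 2 \<Longrightarrow> subgroup (D i) A"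
  and D_subset_Gc: "i \<ge> 2 \<Longrightarrow> D i \<subseteq> Gc i"
  using A.incl_subgroup[OF subgroup_Gc_step normal_imp_subgroup[OF normal_D]]
    subgroup.subset[OF normal_imp_subgroup[OF normal_D]] by auto

lemma R_subset_D: "i \<ge> 2 \<Longrightarrow> R i \<subseteq> D i"
  using R_derived A.derived_incl[OF subset_refl subgroup_D] by simp

lemma R_pred:
  assumes j: "j \<ge> 2"
  shows subgroup_R_pred: "subgroup (R (j - 1)) A"
    and R_pred_subset_Gc: "R (j - 1) \<subseteq> Gc (j - 1)"
proof (atomize (full), cases "j = 2")
  case False
  then have j1: "j - 1 \<ge> 2" using j by simp
  show "subgroup (R (j - 1)) A \<and> R (j - 1) \<subseteq> Gc (j - 1)"
    using R_derived[OF j1] A.derived_is_subgroup[OF subgroup.subset[OF subgroup_D[OF j1]]]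
      R_subset_D[OF j1] D_subset_Gc[OF j1] by auto
qed (use subgroup_Gc_1 R_1 in simp)

lemma wreath_quotient_step: "j \<ge> 2 \<Longrightarrow> wreath_quotient (A\<lparr>carrier := Gc (j - 1)\<rparr>) (M j)"
  using extra_special_M[of j] A.subgroup_imp_group[OF subgroup_Gc[of "j - 1"]]
  by (intro wreath_quotient.intro wreath_base.intro wreath_quotient_axioms.intro)
     (simp_all add: extra_special_def)

lemma finite_M: "j \<ge> 2 \<Longrightarrow> finite (carrier (M j))"
  using extra_special_M by (simp add: extra_special_def)

lemma D_finite_prime_power:
  assumes j: "j \<ge> 2" and fin: "finite (Gc (j - 1))"
  shows "finite (D j) \<and> (\<exists>a. card (D j) = p j ^ a)"
proof -
  let ?H = "A\<lparr>carrier := Gc (j - 1)\<rparr>"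
  interpret W: wreath_quotient ?H "M j" by (rule wreath_quotient_step[OF j])
  let ?E = "comm_act W.B (quot_act ?H) (carrier W.B) (R (j - 1))"
  obtain \<phi> where "\<phi> \<in> iso (A\<lparr>carrier := D j\<rparr>) (D_concrete ?H (R (j - 1)) (M j))"
    using D_equivariant_iso[OF j] by blast
  then have bij: "bij_betw \<phi> (D j) ?E" by (simp add: iso_def D_concrete_def)
  have E: "subgroup ?E W.B"
    by (rule W.B.subgroup_comm_act[OF subset_refl])
       (use W.quot_act_hom R_pred_subset_Gc[OF j] hom_in_carrier in fastforce)
  have finB: "finite (carrier W.B)"
    and B_dvd: "card (carrier W.B) dvd card (carrier (M j)) ^ card (Gc (j - 1))"
    using W.card_quot_base_dvd fin finite_M[OF j] by simp_all
  have "card ?E dvd card (carrier W.B)"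
    by (rule W.B.card_subgroup_dvd[OF W.B.subgroup_self E subgroup.subset[OF E] finB])
  then have "card (D j) dvd p j ^ (3 * card (Gc (j - 1)))"
    using dvd_trans[OF _ B_dvd] bij_betw_same_card[OF bij] card_M[OF j] by (simp add: power_mult)
  then have "\<exists>a. card (D j) = p j ^ a"
    using divides_primepow_nat[OF prime_p] j by auto
  moreover have "finite (D j)"
    using bij_betw_finite[OF bij] finite_subset[OF subgroup.subset[OF E] finB] by simp
  ultimately show ?thesis by blast
qed

lemma finite_Gc: "i \<ge> 1 \<Longrightarrow> finite (Gc i)"
proof (induct i)
  case (Suc i)
  show ?case
  proof (cases "i = 0")
    case True
    have "card (Gc 1) > 0" using card_Gc_1 prime_gt_0_nat[OF prime_p[of 1]] by simp
    then show ?thesis using True card_ge_0_finite by simp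
  next
    case False
    then have i: "Suc i \<ge> 2" and "finite (Gc i)" using Suc by auto
    then have "finite (D (Suc i) <#>\<^bsub>A\<^esub> Gc i)"
      using D_finite_prime_power[OF i] by (simp add: set_mult_def)
    then show ?thesis using D_mult_Gc[OF i] by simp
  qed
qed simp

lemma D_prime_power:
  assumes j: "j \<ge> 2"
  shows "finite (D j)" "\<exists>a. card (D j) = p j ^ a"
  using D_finite_prime_power[OF j finite_Gc] j by simp_all

lemma coprime_card_R_pred:
  assumes j: "j \<ge> 2"
  shows "coprime (card (R (j - 1))) (card (carrier (M j)))"
proof -
  have "\<exists>b. card (R (j - 1)) = p (j - 1) ^ b"
  proof (cases "j = 2")
    case True
    then show ?thesis using card_Gc_1 R_1 by (intro exI[of _ 1]) simp
  next
    case False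
    then have j1: "j - 1 \<ge> 2" using j by simp
    obtain a where a: "card (D (j - 1)) = p (j - 1) ^ a"
      using D_prime_power(2)[OF j1] by blast
    have "card (R (j - 1)) dvd card (D (j - 1))"
      by (rule A.card_subgroup_dvd[OF subgroup_D[OF j1] subgroup_R_pred[OF j] R_subset_D[OF j1]
            D_prime_power(1)[OF j1]])
    then show ?thesis using a divides_primepow_nat[OF prime_p] j1 by auto
  qed
  then obtain b where b: "card (R (j - 1)) = p (j - 1) ^ b" ..
  have neq: "p (j - 1) \<noteq> p j" using p_Suc_neq[of "j - 1"] j by (simp add: Suc_diff_1 eq_commute)
  have "coprime (p (j - 1)) (p j)"
    by (rule primes_coprime[OF prime_p prime_p neq]) (use j in simp_all)
  then show ?thesis using b card_M[OF j] by simp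
qed

lemma comm_act_D:
  assumes j: "j \<ge> 2"
  shows "comm_act A (conj_act A) (D j) (R (j - 1)) = D j"
proof -
  let ?H = "A\<lparr>carrier := Gc (j - 1)\<rparr>"
  interpret W: wreath_quotient ?H "M j" by (rule wreath_quotient_step[OF j])
  let ?E = "comm_act W.B (quot_act ?H) (carrier W.B) (R (j - 1))"
  obtain \<phi> where iso: "\<phi> \<in> iso (A\<lparr>carrier := D j\<rparr>) (W.B\<lparr>carrier := ?E\<rparr>)"
    and equivariant: "\<forall>g \<in> Gc (j - 1). \<forall>d \<in> D j. \<phi> (conj_act A g d) = quot_act ?H g (\<phi> d)"
    using D_equivariant_iso[OF j] unfolding D_concrete_def by blast
  have RH: "R (j - 1) \<subseteq> Gc (j - 1)" by (rule R_pred_subset_Gc[OF j])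
  have T: "subgroup (R (j - 1)) ?H"
    using A.subgroup_incl[OF subgroup_R_pred[OF j] subgroup_Gc RH] j by simp
  have E: "subgroup ?E W.B"
    by (rule W.B.subgroup_comm_act[OF subset_refl])
       (use W.quot_act_hom RH hom_in_carrier in fastforce)
  have "Gc (j - 1) \<subseteq> Gc j" by (rule Gc_pred_subset[OF j])
  then have D_closed: "conj_act A g d \<in> D j" if "g \<in> R (j - 1)" "d \<in> D j" for g d
    using A.normal_conj_closed[OF subgroup_Gc_step[OF j] normal_D[OF j]] that RH
    by (auto simp: conj_act_def)
  have equivariant': "\<phi> (conj_act A g d) = quot_act ?H g (\<phi> d)" if "g \<in> R (j - 1)" "d \<in> D j" for g d
    using equivariant that RH by auto
  have finH: "finite (carrier ?H)" using finite_Gc[of "j - 1"] j by simp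
  note E_eq = W.comm_act_quot_base_idem[OF finH finite_M[OF j] T coprime_card_R_pred[OF j]]
  show ?thesis
    by (rule comm_act_eq_of_equivariant_iso[OF group_A subgroup_D[OF j] W.B.is_group E iso D_closed
          equivariant' E_eq])
qed

text \<open>The properties (a)--(c) of \<open>T\<^sub>i\<^sub>k\<close>, together with \<open>D\<^sub>i \<subseteq> T\<^sub>i\<^sub>k\<close>, which carries
  \<open>R\<^sub>i \<le> T\<^sub>i\<^sub>k\<close> into the next step.\<close>

definition segment :: "nat \<Rightarrow> nat \<Rightarrow> 'a set \<Rightarrow> bool" where
  "segment k i T \<longleftrightarrow> T \<lhd> A\<lparr>carrier := Gc i\<rparr>
    \<and> T \<inter> Gc (k - 1) = {\<one>\<^bsub>A\<^esub>}
    \<and> T <#>\<^bsub>A\<^esub> Gc (k - 1) = Gc i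
    \<and> comm_act A (conj_act A) T (R (k - 1)) = T
    \<and> D i \<subseteq> T"

lemma segment_D: "k \<ge> 2 \<Longrightarrow> segment k k (D k)"
  using normal_D D_inter_Gc D_mult_Gc comm_act_D by (simp add: segment_def)

lemma segment_Suc:
  assumes k: "k \<ge> 2" "k \<le> i" and "segment k i T"
  shows "segment k (Suc i) (D (Suc i) <#>\<^bsub>A\<^esub> T)"
proof -
  have T: "T \<lhd> A\<lparr>carrier := Gc i\<rparr>" "T \<inter> Gc (k - 1) = {\<one>\<^bsub>A\<^esub>}" "T <#>\<^bsub>A\<^esub> Gc (k - 1) = Gc i"
    "comm_act A (conj_act A) T (R (k - 1)) = T" "D i \<subseteq> T"
    using \<open>segment k i T\<close> by (simp_all add: segment_def)
  have i: "Suc i \<ge> 2" "i \<ge> 2" and Gk: "Gc (k - 1) \<subseteq> Gc i"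
    using k Gc_mono[of "k - 1" i] by auto
  have Gi: "subgroup (Gc i) A" "Gc i \<subseteq> Gc (Suc i)"
    using subgroup_Gc[of i] Gc_pred_subset[OF i(1)] i by simp_all
  have TA: "subgroup T A" "T \<subseteq> Gc i"
    using A.incl_subgroup[OF Gi(1) normal_imp_subgroup[OF T(1)]]
      subgroup.subset[OF normal_imp_subgroup[OF T(1)]] by simp_all
  have DA: "subgroup (D (Suc i)) A" using subgroup_D[OF i(1)] .
  have DG: "D (Suc i) \<inter> Gc i = {\<one>\<^bsub>A\<^esub>}" "D (Suc i) <#>\<^bsub>A\<^esub> Gc i = Gc (Suc i)"
    using D_inter_Gc[OF i(1)] D_mult_Gc[OF i(1)] by simp_all
  let ?G = "A\<lparr>carrier := Gc (Suc i)\<rparr>"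
  interpret G: group ?G by (rule A.subgroup_imp_group[OF subgroup_Gc_step[OF i(1)]])
  have normal: "D (Suc i) <#>\<^bsub>A\<^esub> T \<lhd> ?G"
    using G.set_mult_normal[OF normal_D[OF i(1)] A.subgroup_incl[OF Gi(1) subgroup_Gc_step[OF i(1)] Gi(2)]]
      DG(2) T(1) by simp
  have inter: "(D (Suc i) <#>\<^bsub>A\<^esub> T) \<inter> Gc (k - 1) = {\<one>\<^bsub>A\<^esub>}"
    using A.set_mult_inter_trivial[OF DA Gi(1) DG(1) TA Gk T(2)] .
  have "(D (Suc i) <#>\<^bsub>A\<^esub> T) <#>\<^bsub>A\<^esub> Gc (k - 1) = D (Suc i) <#>\<^bsub>A\<^esub> (T <#>\<^bsub>A\<^esub> Gc (k - 1))"
    using subgroup_Gc[of "k - 1"] k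
    by (intro A.set_mult_assoc subgroup.subset[OF DA] subgroup.subset[OF TA(1)] subgroup.subset) simp
  then have mult: "(D (Suc i) <#>\<^bsub>A\<^esub> T) <#>\<^bsub>A\<^esub> Gc (k - 1) = Gc (Suc i)"
    using T(3) DG(2) by simp
  have NT: "subgroup (D (Suc i) <#>\<^bsub>A\<^esub> T) A"
    using A.incl_subgroup[OF subgroup_Gc_step[OF i(1)] normal_imp_subgroup[OF normal]] .
  have R: "R (k - 1) \<subseteq> Gc (Suc i)"
    using R_pred_subset_Gc[OF k(1)] Gk Gi(2) by blast
  have comm: "comm_act A (conj_act A) (D (Suc i) <#>\<^bsub>A\<^esub> T) (R (k - 1)) = D (Suc i) <#>\<^bsub>A\<^esub> T"
  proof (rule A.comm_act_set_mult[OF DA TA(1) NT _ _ T(4)])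
    show "R (k - 1) \<subseteq> carrier A" using R subgroup.subset[OF subgroup_Gc_step[OF i(1)]] by blast
    show "conj_act A g y \<in> D (Suc i) <#>\<^bsub>A\<^esub> T" if "g \<in> R (k - 1)" "y \<in> D (Suc i) <#>\<^bsub>A\<^esub> T" for g y
      using A.normal_conj_closed[OF subgroup_Gc_step[OF i(1)] normal] that R
      by (auto simp: conj_act_def)
    show "R i \<subseteq> T" using R_subset_D[OF i(2)] T(5) by blast
    show "comm_act A (conj_act A) (D (Suc i)) (R i) = D (Suc i)"
      using comm_act_D[OF i(1)] by simp
  qed
  have "D (Suc i) \<subseteq> D (Suc i) <#>\<^bsub>A\<^esub> T"
    unfolding set_mult_def using subgroup.one_closed[OF TA(1)] subgroup.mem_carrier[OF DA] by force
  then show ?thesis using normal inter mult comm by (simp add: segment_def)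
qed

lemma segment_T_prod: "k \<ge> 2 \<Longrightarrow> segment k (k + n) (T_prod A D k n)"
  by (induct n) (simp_all add: segment_D segment_Suc)

end

theorem lemma2p6:
  fixes p :: "nat \<Rightarrow> nat" and M :: "nat \<Rightarrow> ('m, 'd) monoid_scheme"
    and A :: "('a, 'c) monoid_scheme" and Gc D R :: "nat \<Rightarrow> 'a set"
    and i :: nat
  assumes "construction p M A Gc D R"
    and "i \<ge> 2"
  shows "\<forall>k. 2 \<le> k \<and> k \<le> i \<longrightarrow>
           T_set A D i k \<lhd> A\<lparr>carrier := Gc i\<rparr>
         \<and> T_set A D i k \<inter> Gc (k - 1) = {\<one>\<^bsub>A\<^esub>}
         \<and> T_set A D i k <#>\<^bsub>A\<^esub> Gc (k - 1) = Gc i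
         \<and> comm_act A (conj_act A) (T_set A D i k) (R (k - 1)) = T_set A D i k"
proof (intro allI impI)
  interpret tower p M A Gc D R by (rule tower.intro[OF assms(1)])
  fix k assume k: "2 \<le> k \<and> k \<le> i"
  then have "segment k i (T_set A D i k)"
    using segment_T_prod[of k "i - k"] by (simp add: T_set_def)
  then show "T_set A D i k \<lhd> A\<lparr>carrier := Gc i\<rparr>
         \<and> T_set A D i k \<inter> Gc (k - 1) = {\<one>\<^bsub>A\<^esub>}
         \<and> T_set A D i k <#>\<^bsub>A\<^esub> Gc (k - 1) = Gc i
         \<and> comm_act A (conj_act A) (T_set A D i k) (R (k - 1)) = T_set A D i k"
    by (simp add: segment_def)
qed

end
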